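(* Let $(t,\eta,\mu)$ be a polynomial monad, i.e. a monoid in $(\mathbf{Poly},\mathcal{y},\triangleleft)$. For sets $A,B$ put $h^t_{A,B}:=[A\mathcal{y},\, t\triangleleft B\mathcal{y}]\in\mathbf{Poly}$. Then the Kleisli category $\mathbf{Set}_t$ is enriched in $(\mathbf{Poly},\mathcal{y},\otimes)$: there is a $(\mathbf{Poly},\mathcal{y},\otimes)$-enriched category whose objects are sets, whose hom-objects are the polynomials $h^t_{A,B}$ (with identities induced by $A\mathcal{y}\cong\mathcal{y}\triangleleft A\mathcal{y}\xrightarrow{\eta\triangleleft A\mathcal{y}} t\triangleleft A\mathcal{y}$ and a unital, associative composition $h^t_{A,B}\otimes h^t_{B,C}\to h^t_{A,C}$), and whose underlying ordinary category (obtained by applying $\mathbf{Poly}(\mathcal{y},-)$ to hom-objects) is $\mathbf{Set}_t$; in particular $\mathbf{Poly}(\mathcal{y},h^t_{A,B})\cong\mathbf{Set}_t(A,B)$.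
   Context: $\mathbf{Poly}$ is the category of polynomial functors $\mathbf{Set}\to\mathbf{Set}$, i.e. functors of the form $p=\sum_{i\in p(1)}\mathcal{y}^{p[i]}$ where $\mathcal{y}^X=\mathrm{Hom}_{\mathbf{Set}}(X,-)$, with natural transformations as morphisms. $\triangleleft$ denotes composition of polynomial functors ($p\triangleleft q = p\circ q$, unit $\mathcal{y}$); $\otimes$ is the Dirichlet (parallel) product $p\otimes q=\sum_{(i,j)\in p(1)\times q(1)}\mathcal{y}^{p[i]\times q[j]}$ with unit $\mathcal{y}$; $[-,-]$ denotes the internal hom of $(\mathbf{Poly},\otimes)$, so maps $r\otimes p\to q$ correspond to maps $r\to[p,q]$. For a set $A$, $A\mathcal{y}=\sum_{a\in A}\mathcal{y}$. The Kleisli category $\mathbf{Set}_t$ has sets as objects and functions $A\to t(B)$ as morphisms $A\to B$. For a monoidal category $(V,I,\otimes)$, a category $\mathcal{C}$ is said to be enriched in $V$ if there is a $V$-enriched category whose underlying category, obtained by applying the lax monoidal functor $V(I,-)\colon V\to\mathbf{Set}$ to hom-objects, is $\mathcal{C}$. *)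

theory Defs
  imports "HOL-Library.FuncSet"
begin

text \<open>A polynomial p = sum over i in p(1) of y^(p[i]) is represented by its set of
positions p(1) and its family of direction sets p[i].  A morphism p -> q is a
map on positions together with, for each position i, a backwards map
q[phi_1 i] -> p[i] on directions.\<close>

type_synonym ('p,'d) poly = "'p set \<times> ('p \<Rightarrow> 'd set)"
type_synonym ('p,'d,'q,'e) pmor = "('p \<Rightarrow> 'q) \<times> ('p \<Rightarrow> 'e \<Rightarrow> 'd)"

definition pos :: "('p,'d) poly \<Rightarrow> 'p set" where "pos p = fst p"
definition dir :: "('p,'d) poly \<Rightarrow> 'p \<Rightarrow> 'd set" where "dir p = snd p"

definition is_pmor :: "('p,'d) poly \<Rightarrow> ('q,'e) poly \<Rightarrow> ('p,'d,'q,'e) pmor \<Rightarrow> bool" where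
  "is_pmor p q \<phi> \<longleftrightarrow>
     (\<forall>i\<in>pos p. fst \<phi> i \<in> pos q \<and> (\<forall>e\<in>dir q (fst \<phi> i). snd \<phi> i e \<in> dir p i))"

definition pmor_eq :: "('p,'d) poly \<Rightarrow> ('q,'e) poly \<Rightarrow> ('p,'d,'q,'e) pmor \<Rightarrow> ('p,'d,'q,'e) pmor \<Rightarrow> bool" where
  "pmor_eq p q \<phi> \<psi> \<longleftrightarrow>
     (\<forall>i\<in>pos p. fst \<phi> i = fst \<psi> i \<and> (\<forall>e\<in>dir q (fst \<phi> i). snd \<phi> i e = snd \<psi> i e))"

text \<open>Diagrammatic composition: first phi, then psi.\<close>
definition pmor_comp :: "('p,'d,'q,'e) pmor \<Rightarrow> ('q,'e,'r,'f) pmor \<Rightarrow> ('p,'d,'r,'f) pmor" where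
  "pmor_comp \<phi> \<psi> = (\<lambda>i. fst \<psi> (fst \<phi> i), \<lambda>i x. snd \<phi> i (snd \<psi> (fst \<phi> i) x))"

definition pid :: "('p,'d,'p,'d) pmor" where "pid = (\<lambda>i. i, \<lambda>i d. d)"

text \<open>The polynomial y, and A y = sum over a in A of y.\<close>
definition yy :: "(unit, unit) poly" where "yy = ({()}, \<lambda>_. {()})"
definition linear :: "'a set \<Rightarrow> ('a, unit) poly" where "linear A = (A, \<lambda>_. {()})"

definition dtensor :: "('p,'d) poly \<Rightarrow> ('q,'e) poly \<Rightarrow> ('p \<times> 'q, 'd \<times> 'e) poly" where
  "dtensor p q = (pos p \<times> pos q, \<lambda>(i,j). dir p i \<times> dir q j)"

definition dtensor_mor :: "('p,'d,'p2,'d2) pmor \<Rightarrow> ('q,'e,'q2,'e2) pmor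
    \<Rightarrow> ('p \<times> 'q, 'd \<times> 'e, 'p2 \<times> 'q2, 'd2 \<times> 'e2) pmor" where
  "dtensor_mor \<phi> \<psi> = (\<lambda>(i,j). (fst \<phi> i, fst \<psi> j), \<lambda>(i,j) (d,e). (snd \<phi> i d, snd \<psi> j e))"

definition dassoc :: "(('p \<times> 'q) \<times> 'r, ('d \<times> 'e) \<times> 'f, 'p \<times> ('q \<times> 'r), 'd \<times> ('e \<times> 'f)) pmor" where
  "dassoc = (\<lambda>((i,j),k). (i,(j,k)), \<lambda>_ (d,(e,f)). ((d,e),f))"

definition dlunit :: "(unit \<times> 'p, unit \<times> 'd, 'p, 'd) pmor" where
  "dlunit = (\<lambda>(u,i). i, \<lambda>_ d. ((),d))"

definition drunit :: "('p \<times> unit, 'd \<times> unit, 'p, 'd) pmor" where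
  "drunit = (\<lambda>(i,u). i, \<lambda>_ d. (d,()))"

definition ydiag :: "(unit, unit, unit \<times> unit, unit \<times> unit) pmor" where
  "ydiag = (\<lambda>_. ((),()), \<lambda>_ _. ())"

definition ctri :: "('p,'d) poly \<Rightarrow> ('q,'e) poly \<Rightarrow> ('p \<times> ('d \<Rightarrow> 'q), 'd \<times> 'e) poly" where
  "ctri p q = (Sigma (pos p) (\<lambda>i. dir p i \<rightarrow>\<^sub>E pos q),
               \<lambda>(i,f). Sigma (dir p i) (\<lambda>d. dir q (f d)))"

text \<open>phi \<triangleleft> psi : p \<triangleleft> q -> p' \<triangleleft> q', where p' is the codomain of phi.\<close>
definition ctri_mor :: "('p2,'d2) poly \<Rightarrow> ('p,'d,'p2,'d2) pmor \<Rightarrow> ('q,'e,'q2,'e2) pmor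
    \<Rightarrow> ('p \<times> ('d \<Rightarrow> 'q), 'd \<times> 'e, 'p2 \<times> ('d2 \<Rightarrow> 'q2), 'd2 \<times> 'e2) pmor" where
  "ctri_mor p2 \<phi> \<psi> =
     (\<lambda>(i,f). (fst \<phi> i, restrict (\<lambda>d2. fst \<psi> (f (snd \<phi> i d2))) (dir p2 (fst \<phi> i))),
      \<lambda>(i,f) (d2,e2). (snd \<phi> i d2, snd \<psi> (f (snd \<phi> i d2)) e2))"

definition tri_lunit :: "(unit \<times> (unit \<Rightarrow> 'p), unit \<times> 'd, 'p, 'd) pmor" where
  "tri_lunit = (\<lambda>(u,f). f (), \<lambda>_ d. ((),d))"

definition tri_lunit_inv :: "('p, 'd, unit \<times> (unit \<Rightarrow> 'p), unit \<times> 'd) pmor" where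
  "tri_lunit_inv = (\<lambda>i. ((), restrict (\<lambda>_. i) {()}), \<lambda>_ (u,d). d)"

definition tri_runit :: "('p \<times> ('d \<Rightarrow> unit), 'd \<times> unit, 'p, 'd) pmor" where
  "tri_runit = (\<lambda>(i,f). i, \<lambda>_ d. (d,()))"

definition tri_assoc :: "('p,'d) poly \<Rightarrow> ('q,'e) poly \<Rightarrow>
   (('p \<times> ('d \<Rightarrow> 'q)) \<times> ('d \<times> 'e \<Rightarrow> 'r), ('d \<times> 'e) \<times> 'f,
    'p \<times> ('d \<Rightarrow> 'q \<times> ('e \<Rightarrow> 'r)), 'd \<times> ('e \<times> 'f)) pmor" where
  "tri_assoc p q =
     (\<lambda>((i,f),g). (i, restrict (\<lambda>d. (f d, restrict (\<lambda>e. g (d,e)) (dir q (f d)))) (dir p i)),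
      \<lambda>_ (d,(e,x)). ((d,e),x))"

definition poly_monad ::
  "('i,'d) poly \<Rightarrow> (unit, unit, 'i, 'd) pmor \<Rightarrow> ('i \<times> ('d \<Rightarrow> 'i), 'd \<times> 'd, 'i, 'd) pmor \<Rightarrow> bool" where
  "poly_monad t \<eta> \<mu> \<longleftrightarrow>
     is_pmor yy t \<eta> \<and> is_pmor (ctri t t) t \<mu> \<and>
     pmor_eq (ctri yy t) t (pmor_comp (ctri_mor t \<eta> pid) \<mu>) tri_lunit \<and>
     pmor_eq (ctri t yy) t (pmor_comp (ctri_mor t pid \<eta>) \<mu>) tri_runit \<and>
     pmor_eq (ctri (ctri t t) t) t
       (pmor_comp (ctri_mor t \<mu> pid) \<mu>)
       (pmor_comp (tri_assoc t t) (pmor_comp (ctri_mor t pid \<mu>) \<mu>))"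

text \<open>[p,q] = sum over phi : p -> q of y^(sum over i in p(1) of q[phi_1 i]).
Morphisms are taken in canonical (extensional) form so that each morphism is
represented by exactly one position.\<close>
definition canon :: "('p,'d) poly \<Rightarrow> ('q,'e) poly \<Rightarrow> ('p,'d,'q,'e) pmor \<Rightarrow> ('p,'d,'q,'e) pmor" where
  "canon p q \<phi> = (restrict (fst \<phi>) (pos p),
                  \<lambda>i. if i \<in> pos p then restrict (snd \<phi> i) (dir q (fst \<phi> i)) else undefined)"

definition homset :: "('p,'d) poly \<Rightarrow> ('q,'e) poly \<Rightarrow> ('p,'d,'q,'e) pmor set" where
  "homset p q = {\<phi>. is_pmor p q \<phi> \<and> canon p q \<phi> = \<phi>}"

definition ihom :: "('p,'d) poly \<Rightarrow> ('q,'e) poly \<Rightarrow> (('p,'d,'q,'e) pmor, 'p \<times> 'e) poly" where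
  "ihom p q = (homset p q, \<lambda>\<phi>. Sigma (pos p) (\<lambda>i. dir q (fst \<phi> i)))"

definition hT :: "('i,'d) poly \<Rightarrow> 'a set \<Rightarrow> 'a set \<Rightarrow>
   (('a, unit, 'i \<times> ('d \<Rightarrow> 'a), 'd \<times> unit) pmor, 'a \<times> ('d \<times> unit)) poly" where
  "hT t A B = ihom (linear A) (ctri t (linear B))"

definition enr_id :: "('i,'d) poly \<Rightarrow> (unit, unit, 'i, 'd) pmor \<Rightarrow> 'a set \<Rightarrow>
   (unit, unit, ('a, unit, 'i \<times> ('d \<Rightarrow> 'a), 'd \<times> unit) pmor, 'a \<times> ('d \<times> unit)) pmor" where
  "enr_id t \<eta> A =
     (\<lambda>_. canon (linear A) (ctri t (linear A)) (pmor_comp tri_lunit_inv (ctri_mor t \<eta> pid)),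
      \<lambda>_ _. ())"

text \<open>t(B) is the set of positions of t \<triangleleft> B y; Set_t(A,B) is the set of
(extensional) functions A -> t(B).\<close>
definition tset :: "('i,'d) poly \<Rightarrow> 'a set \<Rightarrow> ('i \<times> ('d \<Rightarrow> 'a)) set" where
  "tset t B = pos (ctri t (linear B))"

definition kl_hom :: "('i,'d) poly \<Rightarrow> 'a set \<Rightarrow> 'a set \<Rightarrow> ('a \<Rightarrow> 'i \<times> ('d \<Rightarrow> 'a)) set" where
  "kl_hom t A B = A \<rightarrow>\<^sub>E tset t B"

definition kl_unit :: "('i,'d) poly \<Rightarrow> (unit, unit, 'i, 'd) pmor \<Rightarrow> 'a set \<Rightarrow> 'a \<Rightarrow> 'i \<times> ('d \<Rightarrow> 'a)" where
  "kl_unit t \<eta> A = (\<lambda>a\<in>A. (fst \<eta> (), \<lambda>d\<in>dir t (fst \<eta> ()). a))"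

text \<open>Kleisli composition of f : A -> t(B) and g : B -> t(C): mu_C o t(g) o f.\<close>
definition kl_comp :: "('i,'d) poly \<Rightarrow> ('i \<times> ('d \<Rightarrow> 'i), 'd \<times> 'd, 'i, 'd) pmor \<Rightarrow> 'a set
    \<Rightarrow> ('a \<Rightarrow> 'i \<times> ('d \<Rightarrow> 'a)) \<Rightarrow> ('a \<Rightarrow> 'i \<times> ('d \<Rightarrow> 'a)) \<Rightarrow> 'a \<Rightarrow> 'i \<times> ('d \<Rightarrow> 'a)" where
  "kl_comp t \<mu> A f g =
     (\<lambda>a\<in>A. let i = fst (f a); \<phi> = snd (f a);
                 \<psi> = restrict (\<lambda>d. fst (g (\<phi> d))) (dir t i);
                 k = fst \<mu> (i, \<psi>)
             in (k, \<lambda>d'\<in>dir t k. (case snd \<mu> (i, \<psi>) d' of (d, e) \<Rightarrow> snd (g (\<phi> d)) e)))"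

text \<open>Poly(y, h) identified with positions; the underlying map to Set_t
sends x : y -> h^t_{A,B} to the function A -> t(B) of its position.\<close>
definition under :: "(unit, unit, ('a, unit, 'q, 'e) pmor, 'x) pmor \<Rightarrow> 'a \<Rightarrow> 'q" where
  "under x = fst (fst x ())"

definition under_comp ::
  "('hp \<times> 'hp, 'hd \<times> 'hd, 'hp, 'hd) pmor
   \<Rightarrow> (unit, unit, 'hp, 'hd) pmor \<Rightarrow> (unit, unit, 'hp, 'hd) pmor \<Rightarrow> (unit, unit, 'hp, 'hd) pmor" where
  "under_comp c x z = pmor_comp (pmor_comp ydiag (dtensor_mor x z)) c"

end

theory Submission
  imports Defs
begin

text \<open>Write t(B) for the positions of t \<triangleleft> B y. A Kleisli map f : A \<rightarrow> t(B) is a position of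
[A y, t \<triangleleft> B y], and the directions there are the pairs (a, d) with d a direction of f a.
Composition is Kleisli composition on positions; on directions it uses the direction part of \<mu>,
which splits a direction of the composite at a into a direction of f a and a direction of the
second map at the label reached. Read on positions and on directions, the monoid laws of \<eta>
and \<mu> make this Kleisli extension unital and associative together with its splitting of
directions, which is exactly what the enriched category axioms require. Since morphisms
y \<rightarrow> h are the positions of h, the underlying category is Set_t.\<close>

lemma pos_ctri: "pos (ctri p q) = Sigma (pos p) (\<lambda>i. dir p i \<rightarrow>\<^sub>E pos q)"
  by (simp add: ctri_def pos_def)

lemma dir_ctri: "dir (ctri p q) z = Sigma (dir p (fst z)) (\<lambda>d. dir q (snd z d))"
  by (simp add: ctri_def dir_def split_beta)

lemma pos_yy [simp]: "pos yy = {()}" and dir_yy [simp]: "dir yy u = {()}"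
  by (simp_all add: yy_def pos_def dir_def)

lemma pos_linear [simp]: "pos (linear A) = A" and dir_linear [simp]: "dir (linear A) a = {()}"
  by (simp_all add: linear_def pos_def dir_def)

lemma pos_dtensor [simp]: "pos (dtensor p q) = pos p \<times> pos q"
  by (simp add: dtensor_def pos_def)

lemma dir_dtensor [simp]: "dir (dtensor p q) (i,j) = dir p i \<times> dir q j"
  by (simp add: dtensor_def dir_def)

lemma is_pmorI:
  "(\<And>i. i \<in> pos p \<Longrightarrow> fst \<phi> i \<in> pos q) \<Longrightarrow>
   (\<And>i e. i \<in> pos p \<Longrightarrow> e \<in> dir q (fst \<phi> i) \<Longrightarrow> snd \<phi> i e \<in> dir p i) \<Longrightarrow> is_pmor p q \<phi>"
  by (simp add: is_pmor_def)

lemma pmor_eqI: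
  "(\<And>i. i \<in> pos p \<Longrightarrow> fst \<phi> i = fst \<psi> i) \<Longrightarrow>
   (\<And>i e. i \<in> pos p \<Longrightarrow> e \<in> dir q (fst \<phi> i) \<Longrightarrow> snd \<phi> i e = snd \<psi> i e) \<Longrightarrow> pmor_eq p q \<phi> \<psi>"
  by (simp add: pmor_eq_def)

lemma pmor_eqD:
  "pmor_eq p q \<phi> \<psi> \<Longrightarrow> i \<in> pos p \<Longrightarrow> fst \<phi> i = fst \<psi> i"
  "pmor_eq p q \<phi> \<psi> \<Longrightarrow> i \<in> pos p \<Longrightarrow> e \<in> dir q (fst \<phi> i) \<Longrightarrow> snd \<phi> i e = snd \<psi> i e"
  by (simp_all add: pmor_eq_def)

lemma fst_pmor_comp: "fst (pmor_comp \<phi> \<psi>) i = fst \<psi> (fst \<phi> i)"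
  and snd_pmor_comp: "snd (pmor_comp \<phi> \<psi>) i x = snd \<phi> i (snd \<psi> (fst \<phi> i) x)"
  by (simp_all add: pmor_comp_def)

lemma fst_dtensor_mor: "fst (dtensor_mor \<phi> \<psi>) (i,j) = (fst \<phi> i, fst \<psi> j)"
  and snd_dtensor_mor: "snd (dtensor_mor \<phi> \<psi>) (i,j) (d,e) = (snd \<phi> i d, snd \<psi> j e)"
  by (simp_all add: dtensor_mor_def)

lemma pid_simps: "fst pid i = i" "snd pid i d = d"
  by (simp_all add: pid_def)

lemma dlunit_simps: "fst dlunit (u,i) = i" "snd dlunit x d = ((),d)"
  by (simp_all add: dlunit_def)

lemma drunit_simps: "fst drunit (i,u) = i" "snd drunit x d = (d,())"
  by (simp_all add: drunit_def)

lemma dassoc_simps: "fst dassoc ((i,j),k) = (i,(j,k))" "snd dassoc x (d,(e,f)) = ((d,e),f)"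
  by (simp_all add: dassoc_def)

lemmas pmor_simps = fst_pmor_comp snd_pmor_comp fst_dtensor_mor snd_dtensor_mor
  pid_simps dlunit_simps drunit_simps dassoc_simps

lemma restrict_cong_simp:
  "I = J \<Longrightarrow> (\<And>x. x \<in> J =simp=> f x = g x) \<Longrightarrow> restrict f I = restrict g J"
  by (auto simp: restrict_def simp_implies_def)

section \<open>The Kleisli extension on t(B)\<close>

lemma tset_iff: "x \<in> tset t B \<longleftrightarrow> fst x \<in> pos t \<and> snd x \<in> dir t (fst x) \<rightarrow>\<^sub>E B"
  by (cases x) (simp add: tset_def pos_ctri)

lemma tpos_eqI:
  assumes "snd x \<in> extensional (dir t (fst x))" and "snd y \<in> extensional (dir t (fst y))"
    and "fst x = fst y" and "\<And>d. d \<in> dir t (fst x) \<Longrightarrow> snd x d = snd y d"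
  shows "x = y"
  using assms by (intro prod_eqI extensionalityI[of _ "dir t (fst x)"]) auto

lemma kl_unit_apply: "b \<in> B \<Longrightarrow> kl_unit t \<eta> B b = (fst \<eta> (), \<lambda>_\<in>dir t (fst \<eta> ()). b)"
  by (simp add: kl_unit_def)

text \<open>tbind_arg t x k is the position of t \<triangleleft> t obtained by substituting k into the labels of x;
tbind_dir sends a direction of the flattened position to the pair of directions it comes from.\<close>

definition tbind_arg :: "('i,'d) poly \<Rightarrow> 'i \<times> ('d \<Rightarrow> 'a) \<Rightarrow> ('a \<Rightarrow> 'i \<times> ('d \<Rightarrow> 'b)) \<Rightarrow> 'i \<times> ('d \<Rightarrow> 'i)"
  where "tbind_arg t x k = (fst x, \<lambda>d\<in>dir t (fst x). fst (k (snd x d)))"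

definition tbind_dir :: "('i,'d) poly \<Rightarrow> ('i \<times> ('d \<Rightarrow> 'i), 'd \<times> 'd, 'i, 'd) pmor
    \<Rightarrow> 'i \<times> ('d \<Rightarrow> 'a) \<Rightarrow> ('a \<Rightarrow> 'i \<times> ('d \<Rightarrow> 'b)) \<Rightarrow> 'd \<Rightarrow> 'd \<times> 'd"
  where "tbind_dir t \<mu> x k = snd \<mu> (tbind_arg t x k)"

definition tbind :: "('i,'d) poly \<Rightarrow> ('i \<times> ('d \<Rightarrow> 'i), 'd \<times> 'd, 'i, 'd) pmor
    \<Rightarrow> 'i \<times> ('d \<Rightarrow> 'a) \<Rightarrow> ('a \<Rightarrow> 'i \<times> ('d \<Rightarrow> 'b)) \<Rightarrow> 'i \<times> ('d \<Rightarrow> 'b)"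
  where "tbind t \<mu> x k =
    (fst \<mu> (tbind_arg t x k),
     \<lambda>d'\<in>dir t (fst \<mu> (tbind_arg t x k)). case tbind_dir t \<mu> x k d' of (d, e) \<Rightarrow> snd (k (snd x d)) e)"

lemma kl_comp_tbind: "kl_comp t \<mu> A f g = (\<lambda>a\<in>A. tbind t \<mu> (f a) g)"
  by (simp add: kl_comp_def tbind_def tbind_dir_def tbind_arg_def Let_def)

lemma fst_tbind: "fst (tbind t \<mu> x k) = fst \<mu> (tbind_arg t x k)"
  by (simp add: tbind_def)

lemma snd_tbind:
  "d' \<in> dir t (fst (tbind t \<mu> x k)) \<Longrightarrow> tbind_dir t \<mu> x k d' = (d, e) \<Longrightarrow>
   snd (tbind t \<mu> x k) d' = snd (k (snd x d)) e"
  by (simp add: tbind_def)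

lemma tbind_extensional: "snd (tbind t \<mu> x k) \<in> extensional (dir t (fst (tbind t \<mu> x k)))"
  by (simp add: tbind_def)

lemma kl_homD: "f \<in> kl_hom t A B \<Longrightarrow> f \<in> A \<rightarrow> tset t B"
  by (simp add: kl_hom_def PiE_iff)

lemma kl_hom_apply: "f \<in> kl_hom t A B \<Longrightarrow> a \<in> A \<Longrightarrow> f a \<in> tset t B"
  by (auto simp: kl_hom_def)

lemma unit_valued_eq: "(\<phi> :: 'x \<times> ('y \<Rightarrow> 'z \<Rightarrow> unit)) = (fst \<phi>, \<lambda>_ _. ())"
  by (simp add: prod_eq_iff fun_eq_iff)

lemma pos_hT: "\<phi> \<in> pos (hT t A B) \<longleftrightarrow> fst \<phi> \<in> kl_hom t A B"
proof -
  have "is_pmor (linear A) (ctri t (linear B)) \<phi> \<longleftrightarrow> fst \<phi> \<in> A \<rightarrow> tset t B"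
    by (auto simp: is_pmor_def tset_def)
  moreover have "canon (linear A) (ctri t (linear B)) \<phi> = \<phi> \<longleftrightarrow> fst \<phi> \<in> extensional A"
    by (subst (2) unit_valued_eq) (auto simp: canon_def fun_eq_iff extensional_def restrict_def)
  ultimately show ?thesis
    by (auto simp: hT_def ihom_def pos_def homset_def kl_hom_def PiE_def)
qed

lemma dir_hT: "dir (hT t A B) \<phi> = Sigma A (\<lambda>a. dir t (fst (fst \<phi> a)) \<times> {()})"
  by (simp add: hT_def ihom_def dir_def[of "(_,_)"] dir_ctri)

lemma homset_yy: "x \<in> homset yy h \<longleftrightarrow> fst x () \<in> pos h"
proof -
  have "canon yy h x = x"
    by (auto simp: canon_def prod_eq_iff fun_eq_iff restrict_def)
  then show ?thesis by (auto simp: homset_def is_pmor_def)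
qed

lemma enr_id_pos: "fst (enr_id t \<eta> A) () = (kl_unit t \<eta> A, \<lambda>_ _. ())"
proof -
  have "restrict (fst (pmor_comp tri_lunit_inv (ctri_mor t \<eta> pid))) A = kl_unit t \<eta> A"
    by (simp add: kl_unit_def pmor_comp_def tri_lunit_inv_def ctri_mor_def pid_def)
  then show ?thesis
    by (simp add: enr_id_def canon_def fun_eq_iff)
qed

definition enr_comp :: "('i,'d) poly \<Rightarrow> ('i \<times> ('d \<Rightarrow> 'i), 'd \<times> 'd, 'i, 'd) pmor \<Rightarrow> 'a set \<Rightarrow>
    (('a, unit, 'i \<times> ('d \<Rightarrow> 'a), 'd \<times> unit) pmor \<times> ('a, unit, 'i \<times> ('d \<Rightarrow> 'a), 'd \<times> unit) pmor,
     ('a \<times> 'd \<times> unit) \<times> ('a \<times> 'd \<times> unit),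
     ('a, unit, 'i \<times> ('d \<Rightarrow> 'a), 'd \<times> unit) pmor, 'a \<times> 'd \<times> unit) pmor"
  where "enr_comp t \<mu> A =
    (\<lambda>(\<phi>,\<psi>). (kl_comp t \<mu> A (fst \<phi>) (fst \<psi>), \<lambda>_ _. ()),
     \<lambda>(\<phi>,\<psi>) (a,(d',_)). case tbind_dir t \<mu> (fst \<phi> a) (fst \<psi>) d' of
        (d, e) \<Rightarrow> ((a, (d, ())), (snd (fst \<phi> a) d, (e, ()))))"

lemma fst_enr_comp: "fst (enr_comp t \<mu> A) (\<phi>,\<psi>) = (kl_comp t \<mu> A (fst \<phi>) (fst \<psi>), \<lambda>_ _. ())"
  by (simp add: enr_comp_def)

lemma snd_enr_comp:
  "snd (enr_comp t \<mu> A) (\<phi>,\<psi>) (a,(d',u)) = (case tbind_dir t \<mu> (fst \<phi> a) (fst \<psi>) d' of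
     (d, e) \<Rightarrow> ((a, (d, ())), (snd (fst \<phi> a) d, (e, ()))))"
  by (simp add: enr_comp_def)

section \<open>Consequences of the monad laws\<close>

context
  fixes t :: "('i,'d) poly" and \<eta> :: "(unit, unit, 'i, 'd) pmor"
    and \<mu> :: "('i \<times> ('d \<Rightarrow> 'i), 'd \<times> 'd, 'i, 'd) pmor"
  assumes monad: "poly_monad t \<eta> \<mu>"
begin

lemma unit_pos: "fst \<eta> () \<in> pos t"
  using monad by (simp add: poly_monad_def is_pmor_def)

lemma mult_pos: "i \<in> pos t \<Longrightarrow> F \<in> dir t i \<rightarrow>\<^sub>E pos t \<Longrightarrow> fst \<mu> (i,F) \<in> pos t"
  using monad by (auto simp: poly_monad_def is_pmor_def pos_ctri)

lemma mult_dir: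
  "i \<in> pos t \<Longrightarrow> F \<in> dir t i \<rightarrow>\<^sub>E pos t \<Longrightarrow> x \<in> dir t (fst \<mu> (i,F)) \<Longrightarrow>
   snd \<mu> (i,F) x \<in> Sigma (dir t i) (\<lambda>d. dir t (F d))"
  using monad by (auto simp: poly_monad_def is_pmor_def pos_ctri dir_ctri)

lemma mult_unit_left:
  assumes "j \<in> pos t"
  shows "fst \<mu> (fst \<eta> (), \<lambda>_\<in>dir t (fst \<eta> ()). j) = j"
    and "x \<in> dir t j \<Longrightarrow> snd (snd \<mu> (fst \<eta> (), \<lambda>_\<in>dir t (fst \<eta> ()). j) x) = x"
proof -
  have law: "pmor_eq (ctri yy t) t (pmor_comp (ctri_mor t \<eta> pid) \<mu>) tri_lunit"
    using monad by (simp add: poly_monad_def)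
  have pos: "((), \<lambda>_\<in>{()}. j) \<in> pos (ctri yy t)"
    using assms by (simp add: pos_ctri)
  from pmor_eqD(1)[OF law pos] show pos_eq: "fst \<mu> (fst \<eta> (), \<lambda>_\<in>dir t (fst \<eta> ()). j) = j"
    by (simp add: pmor_comp_def ctri_mor_def pid_def tri_lunit_def)
  show "snd (snd \<mu> (fst \<eta> (), \<lambda>_\<in>dir t (fst \<eta> ()). j) x) = x" if "x \<in> dir t j"
    using pmor_eqD(2)[OF law pos, of x] that pos_eq
    by (simp add: pmor_comp_def ctri_mor_def pid_def tri_lunit_def split_beta)
qed

lemma mult_unit_right:
  assumes "i \<in> pos t"
  shows "fst \<mu> (i, \<lambda>_\<in>dir t i. fst \<eta> ()) = i"
    and "x \<in> dir t i \<Longrightarrow> fst (snd \<mu> (i, \<lambda>_\<in>dir t i. fst \<eta> ()) x) = x"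
proof -
  have law: "pmor_eq (ctri t yy) t (pmor_comp (ctri_mor t pid \<eta>) \<mu>) tri_runit"
    using monad by (simp add: poly_monad_def)
  have pos: "(i, \<lambda>_\<in>dir t i. ()) \<in> pos (ctri t yy)"
    using assms by (simp add: pos_ctri)
  from pmor_eqD(1)[OF law pos] show pos_eq: "fst \<mu> (i, \<lambda>_\<in>dir t i. fst \<eta> ()) = i"
    by (simp add: pmor_comp_def ctri_mor_def pid_def tri_runit_def cong: restrict_cong)
  show "fst (snd \<mu> (i, \<lambda>_\<in>dir t i. fst \<eta> ()) x) = x" if "x \<in> dir t i"
    using pmor_eqD(2)[OF law pos, of x] that pos_eq
    by (simp add: pmor_comp_def ctri_mor_def pid_def tri_runit_def split_beta)
qed

lemma mult_assoc:
  assumes "i \<in> pos t" and "F \<in> dir t i \<rightarrow>\<^sub>E pos t"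
    and "G \<in> Sigma (dir t i) (\<lambda>d. dir t (F d)) \<rightarrow>\<^sub>E pos t"
  defines "L \<equiv> (fst \<mu> (i,F), \<lambda>x\<in>dir t (fst \<mu> (i,F)). G (snd \<mu> (i,F) x))"
    and "R \<equiv> (i, \<lambda>d\<in>dir t i. fst \<mu> (F d, \<lambda>e\<in>dir t (F d). G (d,e)))"
  shows "fst \<mu> L = fst \<mu> R"
    and "x \<in> dir t (fst \<mu> R) \<Longrightarrow> snd \<mu> R x = (d, y) \<Longrightarrow>
         snd \<mu> (F d, \<lambda>e\<in>dir t (F d). G (d,e)) y = (e, z) \<Longrightarrow>
         snd \<mu> (i,F) (fst (snd \<mu> L x)) = (d, e) \<and> snd (snd \<mu> L x) = z"
proof -
  have law: "pmor_eq (ctri (ctri t t) t) t (pmor_comp (ctri_mor t \<mu> pid) \<mu>)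
      (pmor_comp (tri_assoc t t) (pmor_comp (ctri_mor t pid \<mu>) \<mu>))"
    using monad by (simp add: poly_monad_def)
  have pos: "((i,F),G) \<in> pos (ctri (ctri t t) t)"
    using assms(1-3) by (simp add: pos_ctri dir_ctri)
  from pmor_eqD(1)[OF law pos] show pos_eq: "fst \<mu> L = fst \<mu> R"
    by (simp add: L_def R_def pmor_comp_def ctri_mor_def pid_def tri_assoc_def cong: restrict_cong_simp)
  assume x: "x \<in> dir t (fst \<mu> R)" and "snd \<mu> R x = (d, y)"
    and "snd \<mu> (F d, \<lambda>e\<in>dir t (F d). G (d,e)) y = (e, z)"
  moreover have "d \<in> dir t i"
  proof -
    have "(\<lambda>d\<in>dir t i. fst \<mu> (F d, \<lambda>e\<in>dir t (F d). G (d,e))) \<in> dir t i \<rightarrow>\<^sub>E pos t"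
      using assms(2,3) by (auto intro!: mult_pos)
    from mult_dir[OF assms(1) this] x \<open>snd \<mu> R x = (d, y)\<close> show ?thesis
      unfolding R_def by (auto dest!: meta_spec[of _ x])
  qed
  ultimately show "snd \<mu> (i,F) (fst (snd \<mu> L x)) = (d, e) \<and> snd (snd \<mu> L x) = z"
    using pmor_eqD(2)[OF law pos, of x] pos_eq
    by (simp add: L_def R_def pmor_comp_def ctri_mor_def pid_def tri_assoc_def split_beta
        cong: restrict_cong_simp)
qed

lemma tbind_arg_PiE:
  "x \<in> tset t B \<Longrightarrow> k \<in> B \<rightarrow> tset t C \<Longrightarrow> snd (tbind_arg t x k) \<in> dir t (fst x) \<rightarrow>\<^sub>E pos t"
  by (auto simp: tbind_arg_def tset_iff)

lemma tbind_dir_in: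
  assumes "x \<in> tset t B" and "k \<in> B \<rightarrow> tset t C" and "d' \<in> dir t (fst (tbind t \<mu> x k))"
  shows "tbind_dir t \<mu> x k d' \<in> Sigma (dir t (fst x)) (\<lambda>d. dir t (fst (k (snd x d))))"
proof -
  have "fst x \<in> pos t" using assms(1) by (simp add: tset_iff)
  from mult_dir[OF this tbind_arg_PiE[OF assms(1,2)]] assms(3) show ?thesis
    by (simp add: tbind_dir_def fst_tbind tbind_arg_def cong: Sigma_cong)
qed

lemma tbind_in_tset:
  assumes x: "x \<in> tset t B" and k: "k \<in> B \<rightarrow> tset t C"
  shows "tbind t \<mu> x k \<in> tset t C"
proof -
  have "fst (tbind t \<mu> x k) \<in> pos t"
    using x mult_pos[OF _ tbind_arg_PiE[OF x k]] by (simp add: fst_tbind tbind_arg_def tset_iff)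
  moreover have "snd (tbind t \<mu> x k) d' \<in> C" if d': "d' \<in> dir t (fst (tbind t \<mu> x k))" for d'
  proof -
    obtain d e where de: "tbind_dir t \<mu> x k d' = (d, e)" by fastforce
    with tbind_dir_in[OF x k d'] have d: "d \<in> dir t (fst x)" and e: "e \<in> dir t (fst (k (snd x d)))"
      by auto
    from d x have "snd x d \<in> B" by (auto simp: tset_iff)
    with k have "k (snd x d) \<in> tset t C" by blast
    with e show ?thesis by (auto simp: snd_tbind[OF d' de] tset_iff intro: PiE_mem)
  qed
  ultimately show ?thesis
    using tbind_extensional[of t \<mu> x k] by (auto simp: tset_iff PiE_iff)
qed

lemma tbind_comp_funcset:
  "g \<in> B \<rightarrow> tset t C \<Longrightarrow> h \<in> C \<rightarrow> tset t D \<Longrightarrow> (\<lambda>b\<in>B. tbind t \<mu> (g b) h) \<in> B \<rightarrow> tset t D"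
  by (rule funcsetI) (simp add: tbind_in_tset[OF funcset_mem])

lemma kl_unit_in_tset: "b \<in> B \<Longrightarrow> kl_unit t \<eta> B b \<in> tset t B"
  using unit_pos by (simp add: kl_unit_apply tset_iff)

lemma kl_unit_funcset: "kl_unit t \<eta> B \<in> B \<rightarrow> tset t B"
  by (rule funcsetI) (rule kl_unit_in_tset)

lemma tbind_unit_left:
  assumes b: "b \<in> B" and k: "k \<in> B \<rightarrow> tset t C"
  shows "tbind t \<mu> (kl_unit t \<eta> B b) k = k b"
    and "d' \<in> dir t (fst (k b)) \<Longrightarrow> snd (tbind_dir t \<mu> (kl_unit t \<eta> B b) k d') = d'"
proof -
  have kb: "k b \<in> tset t C" using k b by blast
  have arg: "tbind_arg t (kl_unit t \<eta> B b) k = (fst \<eta> (), \<lambda>_\<in>dir t (fst \<eta> ()). fst (k b))"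
    using b by (simp add: tbind_arg_def kl_unit_apply cong: restrict_cong)
  have kb_pos: "fst (k b) \<in> pos t" using kb by (simp add: tset_iff)
  note unit_law = mult_unit_left[OF kb_pos]
  have pos_eq: "fst (tbind t \<mu> (kl_unit t \<eta> B b) k) = fst (k b)"
    by (simp add: fst_tbind arg unit_law(1))
  show dir_eq: "snd (tbind_dir t \<mu> (kl_unit t \<eta> B b) k d') = d'" if "d' \<in> dir t (fst (k b))" for d'
    using unit_law(2)[OF that] by (simp add: tbind_dir_def arg)
  show "tbind t \<mu> (kl_unit t \<eta> B b) k = k b"
  proof (rule tpos_eqI[OF tbind_extensional _ pos_eq])
    show "snd (k b) \<in> extensional (dir t (fst (k b)))"
      using kb by (simp add: tset_iff PiE_iff)
    fix d' assume d': "d' \<in> dir t (fst (tbind t \<mu> (kl_unit t \<eta> B b) k))"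
    obtain d e where de: "tbind_dir t \<mu> (kl_unit t \<eta> B b) k d' = (d, e)" by fastforce
    have "d \<in> dir t (fst \<eta> ())"
      using tbind_dir_in[OF kl_unit_in_tset[OF b] k d'] b de by (auto simp: kl_unit_apply)
    moreover have "e = d'"
      using dir_eq[of d'] d' de by (simp add: pos_eq)
    ultimately show "snd (tbind t \<mu> (kl_unit t \<eta> B b) k) d' = snd (k b) d'"
      unfolding snd_tbind[OF d' de] using b by (simp add: kl_unit_apply)
  qed
qed

lemma tbind_unit_right:
  assumes x: "x \<in> tset t B"
  shows "tbind t \<mu> x (kl_unit t \<eta> B) = x"
    and "d' \<in> dir t (fst x) \<Longrightarrow> fst (tbind_dir t \<mu> x (kl_unit t \<eta> B) d') = d'"
proof -
  have arg: "tbind_arg t x (kl_unit t \<eta> B) = (fst x, \<lambda>_\<in>dir t (fst x). fst \<eta> ())"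
  proof -
    have "\<And>d. d \<in> dir t (fst x) \<Longrightarrow> snd x d \<in> B" using x by (auto simp: tset_iff)
    then show ?thesis by (simp add: tbind_arg_def kl_unit_apply cong: restrict_cong)
  qed
  have x_pos: "fst x \<in> pos t" using x by (simp add: tset_iff)
  note unit_law = mult_unit_right[OF x_pos]
  have pos_eq: "fst (tbind t \<mu> x (kl_unit t \<eta> B)) = fst x"
    by (simp add: fst_tbind arg unit_law(1))
  show dir_eq: "fst (tbind_dir t \<mu> x (kl_unit t \<eta> B) d') = d'" if "d' \<in> dir t (fst x)" for d'
    using unit_law(2)[OF that] by (simp add: tbind_dir_def arg)
  show "tbind t \<mu> x (kl_unit t \<eta> B) = x"
  proof (rule tpos_eqI[OF tbind_extensional _ pos_eq])
    show "snd x \<in> extensional (dir t (fst x))"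
      using x by (simp add: tset_iff PiE_iff)
    fix d' assume d': "d' \<in> dir t (fst (tbind t \<mu> x (kl_unit t \<eta> B)))"
    obtain d e where de: "tbind_dir t \<mu> x (kl_unit t \<eta> B) d' = (d, e)" by fastforce
    have "d = d'"
      using dir_eq[of d'] d' de by (simp add: pos_eq)
    moreover have "d \<in> dir t (fst x)" "e \<in> dir t (fst (kl_unit t \<eta> B (snd x d)))"
      using tbind_dir_in[OF x kl_unit_funcset d'] de by auto
    moreover have "snd x d \<in> B" if "d \<in> dir t (fst x)"
      using x that by (auto simp: tset_iff)
    ultimately show "snd (tbind t \<mu> x (kl_unit t \<eta> B)) d' = snd x d'"
      unfolding snd_tbind[OF d' de] by (simp add: kl_unit_apply)
  qed
qed

text \<open>F and G are the two layers of the position ((fst x, F), G) of (t \<triangleleft> t) \<triangleleft> t at which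
associativity of \<mu> is applied.\<close>

lemma tbind_arg_assoc:
  assumes x: "x \<in> tset t B" and g: "g \<in> B \<rightarrow> tset t C" and h: "h \<in> C \<rightarrow> tset t D"
    and F: "F = snd (tbind_arg t x g)"
    and G: "G = (\<lambda>(d,e)\<in>Sigma (dir t (fst x)) (\<lambda>d. dir t (F d)). fst (h (snd (g (snd x d)) e)))"
  shows "G \<in> Sigma (dir t (fst x)) (\<lambda>d. dir t (F d)) \<rightarrow>\<^sub>E pos t"
    and "tbind_arg t (tbind t \<mu> x g) h =
           (fst \<mu> (fst x, F), \<lambda>y\<in>dir t (fst \<mu> (fst x, F)). G (snd \<mu> (fst x, F) y))"
    and "tbind_arg t x (\<lambda>b\<in>B. tbind t \<mu> (g b) h) =
           (fst x, \<lambda>d\<in>dir t (fst x). fst \<mu> (F d, \<lambda>e\<in>dir t (F d). G (d,e)))"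
    and "p \<in> dir t (fst x) \<Longrightarrow> tbind_arg t (g (snd x p)) h = (F p, \<lambda>e\<in>dir t (F p). G (p,e))"
proof -
  have x_B: "snd x d \<in> B" if "d \<in> dir t (fst x)" for d
    using x that by (auto simp: tset_iff)
  have F_apply: "F d = fst (g (snd x d))" if "d \<in> dir t (fst x)" for d
    using that by (simp add: F tbind_arg_def)
  have h_D: "h (snd (g (snd x d)) e) \<in> tset t D" if "d \<in> dir t (fst x)" "e \<in> dir t (F d)" for d e
  proof (rule funcset_mem[OF h])
    have "g (snd x d) \<in> tset t C" using funcset_mem[OF g x_B[OF that(1)]] .
    with that(2) show "snd (g (snd x d)) e \<in> C"
      by (auto simp: F_apply[OF that(1)] tset_iff intro: PiE_mem)
  qed
  show "G \<in> Sigma (dir t (fst x)) (\<lambda>d. dir t (F d)) \<rightarrow>\<^sub>E pos t"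
    using h_D by (auto simp: G tset_iff)
  show arg_at: "tbind_arg t (g (snd x p)) h = (F p, \<lambda>e\<in>dir t (F p). G (p,e))"
    if "p \<in> dir t (fst x)" for p
    using that by (simp add: tbind_arg_def F_apply G cong: restrict_cong)
  show "tbind_arg t x (\<lambda>b\<in>B. tbind t \<mu> (g b) h) =
      (fst x, \<lambda>d\<in>dir t (fst x). fst \<mu> (F d, \<lambda>e\<in>dir t (F d). G (d,e)))"
    using x_B by (simp add: tbind_arg_def[of t x] fst_tbind arg_at cong: restrict_cong)
  have arg_g: "tbind_arg t x g = (fst x, F)"
    by (simp add: F tbind_arg_def)
  have "(\<lambda>y\<in>dir t (fst (tbind t \<mu> x g)). fst (h (snd (tbind t \<mu> x g) y))) =
      (\<lambda>y\<in>dir t (fst \<mu> (fst x, F)). G (snd \<mu> (fst x, F) y))"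
    unfolding fst_tbind arg_g
  proof (rule restrict_ext)
    fix y assume y: "y \<in> dir t (fst \<mu> (fst x, F))"
    then have y': "y \<in> dir t (fst (tbind t \<mu> x g))" by (simp add: fst_tbind arg_g)
    obtain d e where de: "tbind_dir t \<mu> x g y = (d, e)" by fastforce
    with tbind_dir_in[OF x g y'] have "d \<in> dir t (fst x)" "e \<in> dir t (F d)"
      by (auto simp: F_apply)
    with de show "fst (h (snd (tbind t \<mu> x g) y)) = G (snd \<mu> (fst x, F) y)"
      by (simp add: snd_tbind[OF y' de] G tbind_dir_def arg_g)
  qed
  then show "tbind_arg t (tbind t \<mu> x g) h =
      (fst \<mu> (fst x, F), \<lambda>y\<in>dir t (fst \<mu> (fst x, F)). G (snd \<mu> (fst x, F) y))"
    by (simp add: tbind_arg_def[of t "tbind t \<mu> x g"] fst_tbind arg_g)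
qed

lemma tbind_dir_assoc:
  assumes x: "x \<in> tset t B" and g: "g \<in> B \<rightarrow> tset t C" and h: "h \<in> C \<rightarrow> tset t D"
  shows "fst (tbind t \<mu> (tbind t \<mu> x g) h) = fst (tbind t \<mu> x (\<lambda>b\<in>B. tbind t \<mu> (g b) h))"
    and "d' \<in> dir t (fst (tbind t \<mu> x (\<lambda>b\<in>B. tbind t \<mu> (g b) h))) \<Longrightarrow>
       tbind_dir t \<mu> x (\<lambda>b\<in>B. tbind t \<mu> (g b) h) d' = (p, r) \<Longrightarrow>
       tbind_dir t \<mu> (g (snd x p)) h r = (s, w) \<Longrightarrow>
       tbind_dir t \<mu> x g (fst (tbind_dir t \<mu> (tbind t \<mu> x g) h d')) = (p, s) \<and>
       snd (tbind_dir t \<mu> (tbind t \<mu> x g) h d') = w"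
proof -
  define F where "F = snd (tbind_arg t x g)"
  define G where "G = (\<lambda>(d,e)\<in>Sigma (dir t (fst x)) (\<lambda>d. dir t (F d)). fst (h (snd (g (snd x d)) e)))"
  note args = tbind_arg_assoc[OF x g h F_def G_def]
  have arg_g: "tbind_arg t x g = (fst x, F)"
    by (simp add: F_def tbind_arg_def)
  have "fst x \<in> pos t" using x by (simp add: tset_iff)
  note law = mult_assoc[OF this tbind_arg_PiE[OF x g, folded F_def] args(1)]
  show "fst (tbind t \<mu> (tbind t \<mu> x g) h) = fst (tbind t \<mu> x (\<lambda>b\<in>B. tbind t \<mu> (g b) h))"
    using law(1) by (simp add: fst_tbind args(2,3))
  assume d': "d' \<in> dir t (fst (tbind t \<mu> x (\<lambda>b\<in>B. tbind t \<mu> (g b) h)))"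
    and pr: "tbind_dir t \<mu> x (\<lambda>b\<in>B. tbind t \<mu> (g b) h) d' = (p, r)"
    and sw: "tbind_dir t \<mu> (g (snd x p)) h r = (s, w)"
  from tbind_dir_in[OF x tbind_comp_funcset[OF g h] d'] pr have p: "p \<in> dir t (fst x)" by auto
  from law(2)[of d' p r s w] d' pr sw
  show "tbind_dir t \<mu> x g (fst (tbind_dir t \<mu> (tbind t \<mu> x g) h d')) = (p, s) \<and>
      snd (tbind_dir t \<mu> (tbind t \<mu> x g) h d') = w"
    by (simp add: tbind_dir_def fst_tbind arg_g args(2,3) args(4)[OF p])
qed

lemma tbind_assoc:
  assumes x: "x \<in> tset t B" and g: "g \<in> B \<rightarrow> tset t C" and h: "h \<in> C \<rightarrow> tset t D"
  shows "tbind t \<mu> (tbind t \<mu> x g) h = tbind t \<mu> x (\<lambda>b\<in>B. tbind t \<mu> (g b) h)"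
proof (rule tpos_eqI[OF tbind_extensional tbind_extensional tbind_dir_assoc(1)[OF x g h]])
  fix d' assume d'_L: "d' \<in> dir t (fst (tbind t \<mu> (tbind t \<mu> x g) h))"
  let ?K = "\<lambda>b\<in>B. tbind t \<mu> (g b) h"
  note K = tbind_comp_funcset[OF g h]
  have d': "d' \<in> dir t (fst (tbind t \<mu> x ?K))"
    using d'_L tbind_dir_assoc(1)[OF x g h] by simp
  obtain p r where pr: "tbind_dir t \<mu> x ?K d' = (p, r)" by fastforce
  obtain s w where sw: "tbind_dir t \<mu> (g (snd x p)) h r = (s, w)" by fastforce
  obtain y q where yq: "tbind_dir t \<mu> (tbind t \<mu> x g) h d' = (y, q)" by fastforce
  from tbind_dir_assoc(2)[OF x g h d' pr sw] yq
  have y: "tbind_dir t \<mu> x g y = (p, s)" and q: "q = w" by auto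
  from tbind_dir_in[OF x K d'] pr have p: "p \<in> dir t (fst x)" by auto
  with x have x_p: "snd x p \<in> B" by (auto simp: tset_iff)
  from tbind_dir_in[OF x K d'] pr x_p
  have r: "r \<in> dir t (fst (tbind t \<mu> (g (snd x p)) h))" by auto
  from tbind_dir_in[OF tbind_in_tset[OF x g] h d'_L] yq
  have "y \<in> dir t (fst (tbind t \<mu> x g))" by auto
  with p r show "snd (tbind t \<mu> (tbind t \<mu> x g) h) d' = snd (tbind t \<mu> x ?K) d'"
    by (simp add: snd_tbind[OF d'_L yq] snd_tbind[OF d' pr] snd_tbind[OF _ y] snd_tbind[OF r sw] q x_p)
qed

lemma kl_unit_in_kl_hom: "kl_unit t \<eta> A \<in> kl_hom t A A"
  unfolding kl_hom_def by (rule PiE_I) (simp_all add: kl_unit_in_tset, simp add: kl_unit_def)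

lemma kl_comp_in_kl_hom:
  assumes f: "f \<in> kl_hom t A B" and g: "g \<in> kl_hom t B C"
  shows "kl_comp t \<mu> A f g \<in> kl_hom t A C"
  using tbind_in_tset[OF kl_hom_apply[OF f] kl_homD[OF g]]
  by (simp add: kl_hom_def kl_comp_tbind restrict_PiE_iff)

lemma kl_hom_eqI: "f \<in> kl_hom t A B \<Longrightarrow> (\<And>a. a \<in> A \<Longrightarrow> g a = f a) \<Longrightarrow> restrict g A = f"
  by (auto simp: kl_hom_def PiE_iff extensional_def)

lemma kl_comp_unit_left:
  assumes "f \<in> kl_hom t A B" shows "kl_comp t \<mu> A (kl_unit t \<eta> A) f = f"
  unfolding kl_comp_tbind using assms
  by (rule kl_hom_eqI) (rule tbind_unit_left(1)[OF _ kl_homD[OF assms]])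

lemma kl_comp_unit_right: "f \<in> kl_hom t A B \<Longrightarrow> kl_comp t \<mu> A f (kl_unit t \<eta> B) = f"
  unfolding kl_comp_tbind by (rule kl_hom_eqI) (simp_all add: tbind_unit_right kl_hom_apply)

lemma kl_comp_assoc:
  assumes f: "f \<in> kl_hom t A B" and g: "g \<in> kl_hom t B C" and h: "h \<in> kl_hom t C D"
  shows "kl_comp t \<mu> A (kl_comp t \<mu> A f g) h = kl_comp t \<mu> A f (kl_comp t \<mu> B g h)"
  unfolding kl_comp_tbind
  using tbind_assoc[OF kl_hom_apply[OF f] kl_homD[OF g] kl_homD[OF h]]
  by (intro restrict_ext) simp

lemma enr_id_is_pmor: "is_pmor yy (hT t A A) (enr_id t \<eta> A)"
  by (simp add: is_pmor_def pos_hT enr_id_pos kl_unit_in_kl_hom)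

lemma enr_comp_is_pmor: "is_pmor (dtensor (hT t A B) (hT t B C)) (hT t A C) (enr_comp t \<mu> A)"
proof (rule is_pmorI)
  fix i assume "i \<in> pos (dtensor (hT t A B) (hT t B C))"
  then obtain \<phi> \<psi> where i: "i = (\<phi>, \<psi>)"
    and f: "fst \<phi> \<in> kl_hom t A B" and g: "fst \<psi> \<in> kl_hom t B C"
    by (auto simp: pos_hT)
  then show "fst (enr_comp t \<mu> A) i \<in> pos (hT t A C)"
    by (simp add: fst_enr_comp pos_hT kl_comp_in_kl_hom)
  fix e assume "e \<in> dir (hT t A C) (fst (enr_comp t \<mu> A) i)"
  then obtain a d' where e: "e = (a, (d', ()))" and a: "a \<in> A"
    and d': "d' \<in> dir t (fst (tbind t \<mu> (fst \<phi> a) (fst \<psi>)))"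
    by (auto simp: i fst_enr_comp dir_hT kl_comp_tbind)
  obtain d d'' where dd: "tbind_dir t \<mu> (fst \<phi> a) (fst \<psi>) d' = (d, d'')" by fastforce
  have fa: "fst \<phi> a \<in> tset t B" using kl_hom_apply[OF f a] .
  from tbind_dir_in[OF fa kl_homD[OF g] d'] dd
  have "d \<in> dir t (fst (fst \<phi> a))" and "d'' \<in> dir t (fst (fst \<psi> (snd (fst \<phi> a) d)))" by auto
  moreover from this(1) fa have "snd (fst \<phi> a) d \<in> B" by (auto simp: tset_iff)
  ultimately show "snd (enr_comp t \<mu> A) i e \<in> dir (dtensor (hT t A B) (hT t B C)) i"
    by (simp add: i e snd_enr_comp dd dir_hT a)
qed

lemma enr_comp_unit_left:
  "pmor_eq (dtensor yy (hT t A B)) (hT t A B)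
     (pmor_comp (dtensor_mor (enr_id t \<eta> A) pid) (enr_comp t \<mu> A)) dlunit"
proof (rule pmor_eqI)
  fix i assume "i \<in> pos (dtensor yy (hT t A B))"
  then obtain \<phi> where i: "i = ((), \<phi>)" and f: "fst \<phi> \<in> kl_hom t A B"
    by (auto simp: pos_hT)
  have pos_eq: "fst (pmor_comp (dtensor_mor (enr_id t \<eta> A) pid) (enr_comp t \<mu> A)) i = \<phi>"
    using unit_valued_eq[of \<phi>]
    by (simp add: i pmor_simps fst_enr_comp enr_id_pos kl_comp_unit_left[OF f])
  then show "fst (pmor_comp (dtensor_mor (enr_id t \<eta> A) pid) (enr_comp t \<mu> A)) i = fst dlunit i"
    by (simp add: i dlunit_simps)
  fix e assume "e \<in> dir (hT t A B) (fst (pmor_comp (dtensor_mor (enr_id t \<eta> A) pid) (enr_comp t \<mu> A)) i)"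
  then obtain a d' where e: "e = (a, (d', ()))" and a: "a \<in> A" and d': "d' \<in> dir t (fst (fst \<phi> a))"
    by (auto simp: pos_eq dir_hT)
  obtain d d'' where dd: "tbind_dir t \<mu> (kl_unit t \<eta> A a) (fst \<phi>) d' = (d, d'')" by fastforce
  note unit_law = tbind_unit_left[OF a kl_homD[OF f]]
  have "d'' = d'"
    using unit_law(2)[OF d'] dd by simp
  moreover have "d \<in> dir t (fst \<eta> ())"
  proof -
    from d' have "d' \<in> dir t (fst (tbind t \<mu> (kl_unit t \<eta> A a) (fst \<phi>)))"
      by (simp only: unit_law(1))
    from tbind_dir_in[OF kl_unit_in_tset[OF a] kl_homD[OF f] this] dd a show ?thesis
      by (simp add: kl_unit_apply)
  qed
  ultimately show "snd (pmor_comp (dtensor_mor (enr_id t \<eta> A) pid) (enr_comp t \<mu> A)) i e = snd dlunit i e"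
    by (simp add: i e pmor_simps snd_enr_comp enr_id_pos dd) (simp add: a kl_unit_apply)
qed

lemma enr_comp_unit_right:
  "pmor_eq (dtensor (hT t A B) yy) (hT t A B)
     (pmor_comp (dtensor_mor pid (enr_id t \<eta> B)) (enr_comp t \<mu> A)) drunit"
proof (rule pmor_eqI)
  fix i assume "i \<in> pos (dtensor (hT t A B) yy)"
  then obtain \<phi> where i: "i = (\<phi>, ())" and f: "fst \<phi> \<in> kl_hom t A B"
    by (auto simp: pos_hT)
  have pos_eq: "fst (pmor_comp (dtensor_mor pid (enr_id t \<eta> B)) (enr_comp t \<mu> A)) i = \<phi>"
    using unit_valued_eq[of \<phi>]
    by (simp add: i pmor_simps fst_enr_comp enr_id_pos kl_comp_unit_right[OF f])
  then show "fst (pmor_comp (dtensor_mor pid (enr_id t \<eta> B)) (enr_comp t \<mu> A)) i = fst drunit i"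
    by (simp add: i drunit_simps)
  fix e assume "e \<in> dir (hT t A B) (fst (pmor_comp (dtensor_mor pid (enr_id t \<eta> B)) (enr_comp t \<mu> A)) i)"
  then obtain a d' where e: "e = (a, (d', ()))" and a: "a \<in> A" and d': "d' \<in> dir t (fst (fst \<phi> a))"
    by (auto simp: pos_eq dir_hT)
  obtain d d'' where dd: "tbind_dir t \<mu> (fst \<phi> a) (kl_unit t \<eta> B) d' = (d, d'')" by fastforce
  have "d = d'"
    using tbind_unit_right(2)[OF kl_hom_apply[OF f a] d'] dd by simp
  then show "snd (pmor_comp (dtensor_mor pid (enr_id t \<eta> B)) (enr_comp t \<mu> A)) i e = snd drunit i e"
    by (simp add: i e pmor_simps snd_enr_comp enr_id_pos dd)
qed

lemma enr_comp_assoc: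
  "pmor_eq (dtensor (dtensor (hT t A B) (hT t B C)) (hT t C D)) (hT t A D)
     (pmor_comp (dtensor_mor (enr_comp t \<mu> A) pid) (enr_comp t \<mu> A))
     (pmor_comp dassoc (pmor_comp (dtensor_mor pid (enr_comp t \<mu> B)) (enr_comp t \<mu> A)))"
proof (rule pmor_eqI)
  fix i assume "i \<in> pos (dtensor (dtensor (hT t A B) (hT t B C)) (hT t C D))"
  then obtain \<phi> \<psi> \<chi> where i: "i = ((\<phi>, \<psi>), \<chi>)" and f: "fst \<phi> \<in> kl_hom t A B"
    and g: "fst \<psi> \<in> kl_hom t B C" and h: "fst \<chi> \<in> kl_hom t C D"
    by (auto simp: pos_hT)
  then show "fst (pmor_comp (dtensor_mor (enr_comp t \<mu> A) pid) (enr_comp t \<mu> A)) i =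
      fst (pmor_comp dassoc (pmor_comp (dtensor_mor pid (enr_comp t \<mu> B)) (enr_comp t \<mu> A))) i"
    by (simp add: pmor_simps fst_enr_comp kl_comp_assoc)
  fix e assume "e \<in> dir (hT t A D) (fst (pmor_comp (dtensor_mor (enr_comp t \<mu> A) pid) (enr_comp t \<mu> A)) i)"
  then obtain a d' where e: "e = (a, (d', ()))" and a: "a \<in> A"
    and d': "d' \<in> dir t (fst (tbind t \<mu> (tbind t \<mu> (fst \<phi> a) (fst \<psi>)) (fst \<chi>)))"
    by (auto simp: i pmor_simps fst_enr_comp dir_hT kl_comp_tbind)
  define x where "x = fst \<phi> a"
  have x: "x \<in> tset t B" using kl_hom_apply[OF f a] by (simp add: x_def)
  note g = kl_homD[OF g] and h = kl_homD[OF h]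
  obtain p r where pr: "tbind_dir t \<mu> x (\<lambda>b\<in>B. tbind t \<mu> (fst \<psi> b) (fst \<chi>)) d' = (p, r)"
    by fastforce
  obtain s w where sw: "tbind_dir t \<mu> (fst \<psi> (snd x p)) (fst \<chi>) r = (s, w)" by fastforce
  obtain y q where yq: "tbind_dir t \<mu> (tbind t \<mu> x (fst \<psi>)) (fst \<chi>) d' = (y, q)" by fastforce
  note assoc_pos = tbind_dir_assoc(1)[OF x g h]
  from tbind_dir_assoc(2)[OF x g h _ pr sw] d' yq assoc_pos
  have y: "tbind_dir t \<mu> x (fst \<psi>) y = (p, s)" and q: "q = w" by (auto simp: x_def)
  from tbind_dir_in[OF tbind_in_tset[OF x g] h] d' yq
  have "y \<in> dir t (fst (tbind t \<mu> x (fst \<psi>)))" by (force simp: x_def)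
  from snd_tbind[OF this y]
  show "snd (pmor_comp (dtensor_mor (enr_comp t \<mu> A) pid) (enr_comp t \<mu> A)) i e =
      snd (pmor_comp dassoc (pmor_comp (dtensor_mor pid (enr_comp t \<mu> B)) (enr_comp t \<mu> A))) i e"
    by (simp add: i e pmor_simps fst_enr_comp snd_enr_comp kl_comp_tbind a
        x_def[symmetric] pr sw yq y q)
qed

end

lemma under_bij: "bij_betw under (homset yy (hT t A B)) (kl_hom t A B)"
proof (rule bij_betwI')
  fix x y assume "x \<in> homset yy (hT t A B)" and "y \<in> homset yy (hT t A B)"
  show "under x = under y \<longleftrightarrow> x = y"
    using unit_valued_eq[of "fst x ()"] unit_valued_eq[of "fst y ()"]
    by (auto simp: under_def prod_eq_iff fun_eq_iff)
next
  fix x assume "x \<in> homset yy (hT t A B)"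
  then show "under x \<in> kl_hom t A B" by (simp add: homset_yy pos_hT under_def)
next
  fix f assume "f \<in> kl_hom t A B"
  then have "(\<lambda>_. (f, \<lambda>_ _. ()), \<lambda>_ _. ()) \<in> homset yy (hT t A B)"
    by (simp add: homset_yy pos_hT)
  then show "\<exists>x\<in>homset yy (hT t A B). f = under x"
    by (force simp: under_def)
qed

lemma under_enr_id: "under (enr_id t \<eta> A) = kl_unit t \<eta> A"
  by (simp add: under_def enr_id_pos)

lemma under_under_comp: "under (under_comp (enr_comp t \<mu> A) x z) = kl_comp t \<mu> A (under x) (under z)"
  by (simp add: under_def under_comp_def pmor_comp_def ydiag_def dtensor_mor_def fst_enr_comp)

theorem mainTheorem1:
  fixes t :: "('i,'d) poly"
    and \<eta> :: "(unit, unit, 'i, 'd) pmor"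
    and \<mu> :: "('i \<times> ('d \<Rightarrow> 'i), 'd \<times> 'd, 'i, 'd) pmor"
  assumes "poly_monad t \<eta> \<mu>"
  shows "\<exists>c :: 'a set \<Rightarrow> 'a set \<Rightarrow> 'a set \<Rightarrow> _.
     (\<forall>A B C. is_pmor (dtensor (hT t A B) (hT t B C)) (hT t A C) (c A B C))
   \<and> (\<forall>A::'a set. is_pmor yy (hT t A A) (enr_id t \<eta> A))
   \<and> (\<forall>A B C D. pmor_eq (dtensor (dtensor (hT t A B) (hT t B C)) (hT t C D)) (hT t A D)
          (pmor_comp (dtensor_mor (c A B C) pid) (c A C D))
          (pmor_comp dassoc (pmor_comp (dtensor_mor pid (c B C D)) (c A B D))))
   \<and> (\<forall>A B. pmor_eq (dtensor yy (hT t A B)) (hT t A B)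
          (pmor_comp (dtensor_mor (enr_id t \<eta> A) pid) (c A A B)) dlunit)
   \<and> (\<forall>A B. pmor_eq (dtensor (hT t A B) yy) (hT t A B)
          (pmor_comp (dtensor_mor pid (enr_id t \<eta> B)) (c A B B)) drunit)
   \<and> (\<forall>A B::'a set. bij_betw under (homset yy (hT t A B)) (kl_hom t A B))
   \<and> (\<forall>A::'a set. under (enr_id t \<eta> A) = kl_unit t \<eta> A)
   \<and> (\<forall>A B C x z. x \<in> homset yy (hT t A B) \<longrightarrow> z \<in> homset yy (hT t B C) \<longrightarrow>
          under (under_comp (c A B C) x z) = kl_comp t \<mu> A (under x) (under z))"
proof (intro exI[of _ "\<lambda>A B C. enr_comp t \<mu> A"] conjI allI impI)
qed (simp_all only: enr_comp_is_pmor[OF assms] enr_id_is_pmor[OF assms] enr_comp_assoc[OF assms]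
    enr_comp_unit_left[OF assms] enr_comp_unit_right[OF assms]
    under_bij under_enr_id under_under_comp)

end
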